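(* Let $X$ be a real Banach space, considered with its weak topology, and let $X^*$ be its dual with the weak$^*$ topology; finite powers carry the product topologies. Let $\kappa$ be an infinite cardinal. Then $hL(X^n)\leq\kappa$ for every $n\in\mathbb N$ if and only if $hd((X^* )^n)\leq\kappa$ for every $n\in\mathbb N$.
   Context: $hd(Z)=\sup\{d(Y):Y\subseteq Z\}$ with $d(Y)$ the least size of a dense subset of $Y$; $hL(Z)=\sup\{L(Y):Y\subseteq Z\}$ with $L(Y)$ the least $\kappa$ such that every open cover of $Y$ has a subcover of size at most $\kappa$. The weak topology on $X$ is generated by the functionals in $X^*$; the weak$^*$ topology on $X^*$ is generated by the evaluations at points of $X$. *)

theory Defs
  imports "HOL-Analysis.Analysis" "HOL-Library.Equipollence"
begin

definition weak_topology :: "'a::real_normed_vector topology" where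
  "weak_topology =
     topology_generated_by {{x. blinfun_apply f x \<in> U} | (f :: 'a \<Rightarrow>\<^sub>L real) U. open U}"

text \<open>The weak* topology on X* = ('a \<Rightarrow>L real): generated by evaluations at points
  of X; this is the library's strong_operator_topology with target real.\<close>
definition weak_star_topology :: "('a::real_normed_vector \<Rightarrow>\<^sub>L real) topology" where
  "weak_star_topology = strong_operator_topology"

definition power_top :: "'a topology \<Rightarrow> nat \<Rightarrow> (nat \<Rightarrow> 'a) topology" where
  "power_top T n = product_topology (\<lambda>_. T) {..<n}"

definition hd_le :: "'a topology \<Rightarrow> 'k set \<Rightarrow> bool" where
  "hd_le T K \<longleftrightarrow>
     (\<forall>Y. Y \<subseteq> topspace T \<longrightarrow>
        (\<exists>D. D \<subseteq> Y \<and> D \<lesssim> K \<and> (subtopology T Y) closure_of D = Y))"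

definition hL_le :: "'a topology \<Rightarrow> 'k set \<Rightarrow> bool" where
  "hL_le T K \<longleftrightarrow>
     (\<forall>Y. Y \<subseteq> topspace T \<longrightarrow>
        (\<forall>\<U>. (\<forall>U\<in>\<U>. openin (subtopology T Y) U) \<and> Y \<subseteq> \<Union>\<U> \<longrightarrow>
           (\<exists>\<V>. \<V> \<subseteq> \<U> \<and> \<V> \<lesssim> K \<and> Y \<subseteq> \<Union>\<V>)))"

end

theory Submission
  imports Defs
begin

text \<open>
  Both topologies are weak topologies of the real pairing \<open>(x, f) \<mapsto> f x\<close>, read in
  the two directions, and the equivalence holds for every pairing
  \<open>ev :: 'x \<Rightarrow> 'y \<Rightarrow> real\<close>.  A basic neighbourhood
  of \<open>u \<in> X\<^sup>n\<close> is cut out by finitely many conditions \<open>a < ev (u i) (v l) < b\<close>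
  with rational \<open>a, b\<close>; it is described by a shape \<open>\<tau>\<close>, the list of triples
  \<open>(i, a, b)\<close>, of which there are only countably many, and parameters
  \<open>v \<in> Y\<^sup>k\<close>.  For fixed \<open>u\<close> the admissible parameters form an open subset of
  \<open>Y\<^sup>k\<close>, so points and parameters swap roles.  To refine an open cover of
  \<open>Z \<subseteq> X\<^sup>n\<close>, put each point into a box inside a member of the cover; for each
  shape, at most \<open>\<kappa>\<close> of these points whose parameters are dense among all
  parameters of that shape already have boxes covering every point of that shape.
  Dually, for \<open>Z \<subseteq> Y\<^sup>n\<close> and each shape, the open parameter sets
  \<open>{x \<in> X\<^sup>k. d lies in the box with parameters x}\<close>, \<open>d \<in> Z\<close>, have a subcover
  indexed by at most \<open>\<kappa>\<close> points \<open>d\<close>, and these points together are dense in \<open>Z\<close>.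
\<close>

unbundle cardinal_syntax

definition pairing_topology :: "('x \<Rightarrow> 'y \<Rightarrow> real) \<Rightarrow> 'x topology" where
  "pairing_topology ev = topology_generated_by {{u. ev u v \<in> U} | v U. open U}"

lemma topspace_pairing_topology [simp]: "topspace (pairing_topology ev) = UNIV"
proof -
  have "{u. ev u v \<in> UNIV} \<in> {{u. ev u v \<in> U} | v U. open U}" for v
    by blast
  then show ?thesis
    unfolding pairing_topology_def topology_generated_by_topspace by blast
qed

lemma continuous_map_pairing_topology:
  "continuous_map (pairing_topology ev) euclideanreal (\<lambda>u. ev u v)"
  unfolding continuous_map_def
proof (intro conjI allI impI)
  fix U :: "real set"
  assume "openin euclideanreal U"
  then have "{u. ev u v \<in> U} \<in> {{u. ev u v \<in> U} | v U. open U}"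
    by auto
  then have "openin (pairing_topology ev) {u. ev u v \<in> U}"
    unfolding pairing_topology_def by (rule topology_generated_by_Basis)
  then show "openin (pairing_topology ev) {u \<in> topspace (pairing_topology ev). ev u v \<in> U}"
    by simp
qed simp

lemma topspace_power_pairing_topology [simp]:
  "topspace (power_top (pairing_topology ev) n) = extensional {..<n}"
  by (simp add: power_top_def PiE_def)

lemma weak_topology_eq_pairing_topology:
  "weak_topology = pairing_topology (\<lambda>x f. blinfun_apply f x)"
  unfolding weak_topology_def pairing_topology_def ..

lemma weak_star_topology_eq_pairing_topology:
  "weak_star_topology = pairing_topology blinfun_apply"
proof -
  have "continuous_map weak_star_topology (pairing_topology blinfun_apply) id"
    unfolding pairing_topology_def
    by (rule continuous_on_generated_topo)
      (auto simp: weak_star_topology_def strong_operator_topology_topspace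
         intro!: openin_continuous_map_preimage[OF strong_operator_topology_continuous_evaluation, simplified])
  moreover have "continuous_map (pairing_topology blinfun_apply) weak_star_topology id"
    unfolding weak_star_topology_def continuous_on_strong_operator_topo_iff_coordinatewise
    unfolding id_def by (intro allI continuous_map_pairing_topology)
  ultimately show ?thesis
    by (simp add: topology_eq topology_finer_continuous_id[symmetric] weak_star_topology_def
        strong_operator_topology_topspace) blast
qed

lemma open_real_contains_rat_interval:
  fixes t :: real
  assumes "open U" "t \<in> U"
  obtains a b :: rat where "t \<in> {of_rat a<..<of_rat b}" "{of_rat a<..<of_rat b} \<subseteq> U"
proof -
  obtain e where "e > 0" and e: "ball t e \<subseteq> U"
    using assms open_contains_ball by blast
  obtain a :: rat where a: "t - e < of_rat a" "of_rat a < t"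
    using of_rat_dense[of "t - e" t] \<open>e > 0\<close> by auto
  obtain b :: rat where b: "t < of_rat b" "of_rat b < t + e"
    using of_rat_dense[of t "t + e"] \<open>e > 0\<close> by auto
  have "{of_rat a<..<of_rat b} \<subseteq> ball t e"
    using a b by (auto simp: dist_real_def)
  then show ?thesis
    using that a b e by auto
qed

definition rat_box :: "('x \<Rightarrow> 'y \<Rightarrow> real) \<Rightarrow> (nat \<times> rat \<times> rat) list \<Rightarrow> (nat \<Rightarrow> 'x) \<Rightarrow> (nat \<Rightarrow> 'y) \<Rightarrow> bool" where
  "rat_box ev \<tau> u v \<longleftrightarrow>
     (\<forall>l<length \<tau>. case \<tau> ! l of (i, a, b) \<Rightarrow> ev (u i) (v l) \<in> {of_rat a<..<of_rat b})"

lemma rat_box_Nil [simp]: "rat_box ev [] u v"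
  by (simp add: rat_box_def)

lemma rat_box_restrict: "rat_box ev \<tau> u (restrict v {..<length \<tau>}) \<longleftrightarrow> rat_box ev \<tau> u v"
  by (simp add: rat_box_def)

lemma rat_box_append:
  "rat_box ev (\<tau>\<^sub>1 @ \<tau>\<^sub>2) u (\<lambda>l. if l < length \<tau>\<^sub>1 then v\<^sub>1 l else v\<^sub>2 (l - length \<tau>\<^sub>1))
     \<longleftrightarrow> rat_box ev \<tau>\<^sub>1 u v\<^sub>1 \<and> rat_box ev \<tau>\<^sub>2 u v\<^sub>2"
proof -
  have split: "(\<forall>l<length \<tau>\<^sub>1 + length \<tau>\<^sub>2. P l) \<longleftrightarrow>
      (\<forall>l<length \<tau>\<^sub>1. P l) \<and> (\<forall>l<length \<tau>\<^sub>2. P (length \<tau>\<^sub>1 + l))" for P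
  proof
    assume "(\<forall>l<length \<tau>\<^sub>1. P l) \<and> (\<forall>l<length \<tau>\<^sub>2. P (length \<tau>\<^sub>1 + l))"
    then show "\<forall>l<length \<tau>\<^sub>1 + length \<tau>\<^sub>2. P l"
      by (metis add_diff_inverse_nat add_less_cancel_left)
  qed auto
  show ?thesis
    unfolding rat_box_def by (simp add: split nth_append)
qed

definition rat_box_nhd :: "('x \<Rightarrow> 'y \<Rightarrow> real) \<Rightarrow> (nat \<Rightarrow> 'x) \<Rightarrow> ((nat \<Rightarrow> 'x) \<Rightarrow> bool) \<Rightarrow> bool" where
  "rat_box_nhd ev u P \<longleftrightarrow> (\<exists>\<tau> v. rat_box ev \<tau> u v \<and> (\<forall>u'. rat_box ev \<tau> u' v \<longrightarrow> P u'))"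

lemma rat_box_nhd_conj:
  assumes "rat_box_nhd ev u P" "rat_box_nhd ev u Q"
  shows "rat_box_nhd ev u (\<lambda>u'. P u' \<and> Q u')"
proof -
  obtain \<tau>\<^sub>1 v\<^sub>1 where "rat_box ev \<tau>\<^sub>1 u v\<^sub>1" "\<forall>u'. rat_box ev \<tau>\<^sub>1 u' v\<^sub>1 \<longrightarrow> P u'"
    using assms(1) unfolding rat_box_nhd_def by blast
  moreover obtain \<tau>\<^sub>2 v\<^sub>2 where "rat_box ev \<tau>\<^sub>2 u v\<^sub>2" "\<forall>u'. rat_box ev \<tau>\<^sub>2 u' v\<^sub>2 \<longrightarrow> Q u'"
    using assms(2) unfolding rat_box_nhd_def by blast
  ultimately have "rat_box ev (\<tau>\<^sub>1 @ \<tau>\<^sub>2) u (\<lambda>l. if l < length \<tau>\<^sub>1 then v\<^sub>1 l else v\<^sub>2 (l - length \<tau>\<^sub>1)) \<and>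
      (\<forall>u'. rat_box ev (\<tau>\<^sub>1 @ \<tau>\<^sub>2) u' (\<lambda>l. if l < length \<tau>\<^sub>1 then v\<^sub>1 l else v\<^sub>2 (l - length \<tau>\<^sub>1))
        \<longrightarrow> P u' \<and> Q u')"
    by (simp add: rat_box_append)
  then show ?thesis
    unfolding rat_box_nhd_def by blast
qed

lemma rat_box_nhd_all_less:
  fixes n :: nat
  assumes "\<And>i. i < n \<Longrightarrow> rat_box_nhd ev u (P i)"
  shows "rat_box_nhd ev u (\<lambda>u'. \<forall>i<n. P i u')"
  using assms
proof (induction n)
  case 0
  then show ?case
    unfolding rat_box_nhd_def by (intro exI[of _ "[]"]) simp
next
  case (Suc n)
  have "rat_box_nhd ev u (\<lambda>u'. (\<forall>i<n. P i u') \<and> P n u')"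
    using Suc by (intro rat_box_nhd_conj) simp_all
  moreover have "(\<lambda>u'. (\<forall>i<n. P i u') \<and> P n u') = (\<lambda>u'. \<forall>i<Suc n. P i u')"
    by (auto simp: less_Suc_eq)
  ultimately show ?case
    by simp
qed

lemma rat_box_nhd_pairing_topology:
  assumes "openin (pairing_topology ev) W" "u i \<in> W"
  shows "rat_box_nhd ev u (\<lambda>u'. u' i \<in> W)"
  using openin_topology_generated_by[OF assms(1)[unfolded pairing_topology_def]] assms(2)
proof (induction arbitrary: u rule: generate_topology_on.induct)
  case Empty
  then show ?case by blast
next
  case (Int A B)
  then have "rat_box_nhd ev u (\<lambda>u'. u' i \<in> A \<and> u' i \<in> B)"
    by (intro rat_box_nhd_conj) simp_all
  then show ?case
    by (simp only: Int_iff)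
next
  case (UN \<K>)
  then obtain A where "A \<in> \<K>" "u i \<in> A"
    by blast
  with UN.IH have "rat_box_nhd ev u (\<lambda>u'. u' i \<in> A)"
    by blast
  with \<open>A \<in> \<K>\<close> show ?case
    unfolding rat_box_nhd_def by blast
next
  case (Basis S)
  then obtain w U where S: "S = {x. ev x w \<in> U}" and "open U"
    by blast
  with Basis.prems obtain a b where "ev (u i) w \<in> {of_rat a<..<of_rat b}" "{of_rat a<..<of_rat b} \<subseteq> U"
    by (metis mem_Collect_eq open_real_contains_rat_interval)
  then have "rat_box ev [(i, a, b)] u (\<lambda>_. w) \<and> (\<forall>u'. rat_box ev [(i, a, b)] u' (\<lambda>_. w) \<longrightarrow> u' i \<in> S)"
    using S by (auto simp: rat_box_def)
  then show ?case
    unfolding rat_box_nhd_def by blast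
qed

lemma openin_power_pairing_topology_rat_box:
  assumes "openin (power_top (pairing_topology ev) n) W" "u \<in> W"
  obtains \<tau> v where "rat_box ev \<tau> u v" "v \<in> extensional {..<length \<tau>}"
    "\<And>u'. u' \<in> topspace (power_top (pairing_topology ev) n) \<Longrightarrow> rat_box ev \<tau> u' v \<Longrightarrow> u' \<in> W"
proof -
  obtain U where U: "\<forall>i\<in>{..<n}. openin (pairing_topology ev) (U i)"
    and "u \<in> PiE {..<n} U" "PiE {..<n} U \<subseteq> W"
    using assms unfolding power_top_def openin_product_topology_alt by blast
  have "rat_box_nhd ev u (\<lambda>u'. \<forall>i<n. u' i \<in> U i)"
  proof (rule rat_box_nhd_all_less)
    fix i
    assume "i < n"
    then show "rat_box_nhd ev u (\<lambda>u'. u' i \<in> U i)"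
      using U \<open>u \<in> PiE {..<n} U\<close> by (intro rat_box_nhd_pairing_topology) auto
  qed
  then obtain \<tau> v where box: "rat_box ev \<tau> u v" and \<tau>: "\<And>u'. rat_box ev \<tau> u' v \<Longrightarrow> \<forall>i<n. u' i \<in> U i"
    unfolding rat_box_nhd_def by blast
  have in_W: "u' \<in> W" if "u' \<in> topspace (power_top (pairing_topology ev) n)" "rat_box ev \<tau> u' v" for u'
  proof -
    have "\<forall>i<n. u' i \<in> U i"
      using \<tau> that(2) by blast
    moreover have "u' \<in> extensional {..<n}"
      using that(1) by simp
    ultimately have "u' \<in> PiE {..<n} U"
      by (simp add: PiE_iff)
    then show ?thesis
      using \<open>PiE {..<n} U \<subseteq> W\<close> by blast
  qed
  let ?v = "restrict v {..<length \<tau>}"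
  have "rat_box ev \<tau> u ?v"
    using box by (simp only: rat_box_restrict)
  moreover have "?v \<in> extensional {..<length \<tau>}"
    by (rule restrict_extensional)
  moreover have "u' \<in> W" if "u' \<in> topspace (power_top (pairing_topology ev) n)" "rat_box ev \<tau> u' ?v" for u'
    using that in_W by (simp only: rat_box_restrict)
  ultimately show thesis
    by (rule that)
qed

lemma openin_rat_box_parameters:
  "openin (power_top (pairing_topology (\<lambda>y x. ev x y)) (length \<tau>))
     {v \<in> topspace (power_top (pairing_topology (\<lambda>y x. ev x y)) (length \<tau>)). rat_box ev \<tau> u v}"
proof -
  let ?T = "power_top (pairing_topology (\<lambda>y x. ev x y)) (length \<tau>)"
  define S where "S l = {v \<in> topspace ?T. case \<tau> ! l of (i, a, b) \<Rightarrow> ev (u i) (v l) \<in> {of_rat a<..<of_rat b}}" for l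
  have S_open: "openin ?T (S l)" if "l \<in> {..<length \<tau>}" for l
  proof -
    obtain i a b where \<tau>l: "\<tau> ! l = (i, a, b)"
      by (metis prod_cases3)
    have "continuous_map ?T (pairing_topology (\<lambda>y x. ev x y)) (\<lambda>v. v l)"
      unfolding power_top_def by (rule continuous_map_product_projection) (use that in simp)
    then have "continuous_map ?T euclideanreal ((\<lambda>y. ev (u i) y) \<circ> (\<lambda>v. v l))"
      by (rule continuous_map_compose[OF _ continuous_map_pairing_topology[of "\<lambda>y x. ev x y" "u i"]])
    then have "continuous_map ?T euclideanreal (\<lambda>v. ev (u i) (v l))"
      by (simp add: o_def)
    from openin_continuous_map_preimage[OF this, of "{of_rat a<..<of_rat b}"]
    show ?thesis
      unfolding S_def \<tau>l by simp
  qed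
  have "openin ?T ((\<Inter>l\<in>{..<length \<tau>}. S l) \<inter> topspace ?T)"
    using S_open by (intro openin_INT) auto
  moreover have "(\<Inter>l\<in>{..<length \<tau>}. S l) \<inter> topspace ?T = {v \<in> topspace ?T. rat_box ev \<tau> u v}"
    unfolding S_def rat_box_def by (intro equalityI subsetI) simp_all
  ultimately show ?thesis
    by simp
qed

lemma countable_UN_lepoll:
  assumes "infinite K" "countable I" "\<And>i. i \<in> I \<Longrightarrow> A i \<lesssim> K"
  shows "(\<Union>i\<in>I. A i) \<lesssim> K"
proof -
  have "I \<lesssim> (UNIV :: nat set)"
    using assms(2) unfolding countable_def lepoll_def by auto
  also have "(UNIV :: nat set) \<lesssim> K"
    using assms(1) infinite_le_lepoll by blast
  finally have "|I| \<le>o |K|"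
    unfolding lepoll_def card_of_ordLeq .
  moreover have "\<forall>i\<in>I. |A i| \<le>o |K|"
    using assms(3) unfolding lepoll_def card_of_ordLeq by blast
  ultimately have "|\<Union>i\<in>I. A i| \<le>o |K|"
    using card_of_UNION_ordLeq_infinite assms(1) by blast
  then show ?thesis
    unfolding lepoll_def card_of_ordLeq[symmetric] .
qed

lemma hL_le_subcover_index:
  assumes "hL_le T K" "\<And>d. d \<in> Y \<Longrightarrow> openin T (V d)"
  shows "\<exists>D\<subseteq>Y. D \<lesssim> K \<and> (\<Union>d\<in>Y. V d) \<subseteq> (\<Union>d\<in>D. V d)"
proof -
  let ?S = "\<Union>d\<in>Y. V d"
  have "?S \<subseteq> topspace T"
    using assms(2) openin_subset by blast
  moreover have "\<forall>U\<in>V ` Y. openin (subtopology T ?S) U"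
  proof
    fix U
    assume "U \<in> V ` Y"
    then have "openin T U" "U = U \<inter> ?S"
      using assms(2) by blast+
    then show "openin (subtopology T ?S) U"
      unfolding openin_subtopology by blast
  qed
  ultimately have "\<exists>\<V>. \<V> \<subseteq> V ` Y \<and> \<V> \<lesssim> K \<and> ?S \<subseteq> \<Union>\<V>"
    using assms(1) unfolding hL_le_def by blast
  then obtain \<V> where "\<V> \<subseteq> V ` Y" "\<V> \<lesssim> K" "?S \<subseteq> \<Union>\<V>"
    by blast
  moreover obtain D where "D \<subseteq> Y" "inj_on V D" "\<V> = V ` D"
    using \<open>\<V> \<subseteq> V ` Y\<close> unfolding subset_image_inj by blast
  ultimately show ?thesis
    by auto
qed

lemma hd_le_dense_index:
  assumes "hd_le T K" "G ` S \<subseteq> topspace T"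
  shows "\<exists>E\<subseteq>S. E \<lesssim> K \<and> (\<forall>s\<in>S. \<forall>W. openin T W \<longrightarrow> G s \<in> W \<longrightarrow> (\<exists>e\<in>E. G e \<in> W))"
proof -
  have "\<exists>D\<subseteq>G ` S. D \<lesssim> K \<and> subtopology T (G ` S) closure_of D = G ` S"
    using assms unfolding hd_le_def by blast
  then obtain D where "D \<subseteq> G ` S" "D \<lesssim> K" and dense: "subtopology T (G ` S) closure_of D = G ` S"
    by blast
  then obtain E where E: "E \<subseteq> S" "inj_on G E" "D = G ` E"
    unfolding subset_image_inj by blast
  have "\<exists>e\<in>E. G e \<in> W" if "s \<in> S" "openin T W" "G s \<in> W" for s W
  proof -
    have "G s \<in> subtopology T (G ` S) closure_of D"
      unfolding dense using \<open>s \<in> S\<close> by (rule imageI)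
    then have "\<forall>U. G s \<in> U \<and> openin (subtopology T (G ` S)) U \<longrightarrow> (\<exists>y. y \<in> D \<and> y \<in> U)"
      unfolding in_closure_of by (rule conjunct2)
    moreover have "openin (subtopology T (G ` S)) (W \<inter> G ` S)"
      using \<open>openin T W\<close> by (rule openin_subtopology_Int)
    moreover have "G s \<in> W \<inter> G ` S"
      using \<open>G s \<in> W\<close> \<open>s \<in> S\<close> by simp
    ultimately obtain y where "y \<in> D" "y \<in> W"
      by (meson IntD1)
    then show ?thesis
      using E(3) by auto
  qed
  with E \<open>D \<lesssim> K\<close> show ?thesis
    by auto
qed

lemma hd_leI:
  assumes "\<And>Y. Y \<subseteq> topspace T \<Longrightarrow>
    \<exists>D\<subseteq>Y. D \<lesssim> K \<and> (\<forall>y\<in>Y. \<forall>W. openin T W \<longrightarrow> y \<in> W \<longrightarrow> (\<exists>d\<in>D. d \<in> W))"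
  shows "hd_le T K"
  unfolding hd_le_def
proof (intro allI impI)
  fix Y
  assume "Y \<subseteq> topspace T"
  then obtain D where "D \<subseteq> Y" "D \<lesssim> K" and D: "\<forall>y\<in>Y. \<forall>W. openin T W \<longrightarrow> y \<in> W \<longrightarrow> (\<exists>d\<in>D. d \<in> W)"
    using assms by metis
  have "Y \<subseteq> subtopology T Y closure_of D"
  proof
    fix y
    assume "y \<in> Y"
    show "y \<in> subtopology T Y closure_of D"
      unfolding in_closure_of openin_subtopology
      using \<open>y \<in> Y\<close> \<open>Y \<subseteq> topspace T\<close> D \<open>D \<subseteq> Y\<close> by (auto; metis subsetD)
  qed
  moreover have "subtopology T Y closure_of D \<subseteq> Y"
    using closure_of_subset_topspace \<open>Y \<subseteq> topspace T\<close> by fastforce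
  ultimately show "\<exists>D\<subseteq>Y. D \<lesssim> K \<and> subtopology T Y closure_of D = Y"
    using \<open>D \<subseteq> Y\<close> \<open>D \<lesssim> K\<close> by blast
qed

lemma hd_le_power_if_hL_le_power:
  fixes ev :: "'x \<Rightarrow> 'y \<Rightarrow> real"
  assumes "infinite K" "\<And>m. hL_le (power_top (pairing_topology ev) m) K"
  shows "hd_le (power_top (pairing_topology (\<lambda>y x. ev x y)) n) K"
proof (rule hd_leI)
  fix Y
  assume Y: "Y \<subseteq> topspace (power_top (pairing_topology (\<lambda>y x. ev x y)) n)"
  define V where "V \<sigma> d = {x \<in> topspace (power_top (pairing_topology ev) (length \<sigma>)). rat_box (\<lambda>y x. ev x y) \<sigma> d x}"
    for \<sigma> d
  have "\<exists>D\<subseteq>Y. D \<lesssim> K \<and> (\<Union>d\<in>Y. V \<sigma> d) \<subseteq> (\<Union>d\<in>D. V \<sigma> d)" for \<sigma>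
  proof (rule hL_le_subcover_index[OF assms(2)])
    fix d
    show "openin (power_top (pairing_topology ev) (length \<sigma>)) (V \<sigma> d)"
      unfolding V_def by (rule openin_rat_box_parameters)
  qed
  then obtain D where D: "\<And>\<sigma>. D \<sigma> \<subseteq> Y" "\<And>\<sigma>. D \<sigma> \<lesssim> K"
    "\<And>\<sigma>. (\<Union>d\<in>Y. V \<sigma> d) \<subseteq> (\<Union>d\<in>D \<sigma>. V \<sigma> d)"
    by metis
  let ?D = "\<Union>\<sigma>. D \<sigma>"
  have "\<exists>d\<in>?D. d \<in> W"
    if "y \<in> Y" and W: "openin (power_top (pairing_topology (\<lambda>y x. ev x y)) n) W" "y \<in> W" for y W
  proof -
    obtain \<sigma> x where "rat_box (\<lambda>y x. ev x y) \<sigma> y x" "x \<in> extensional {..<length \<sigma>}"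
      and inW: "\<And>y'. y' \<in> topspace (power_top (pairing_topology (\<lambda>y x. ev x y)) n) \<Longrightarrow>
        rat_box (\<lambda>y x. ev x y) \<sigma> y' x \<Longrightarrow> y' \<in> W"
      by (rule openin_power_pairing_topology_rat_box[OF W]) (rule that)
    then have "x \<in> V \<sigma> y"
      unfolding V_def by simp
    then obtain d where "d \<in> D \<sigma>" "x \<in> V \<sigma> d"
      using D(3) \<open>y \<in> Y\<close> by blast
    moreover have "d \<in> topspace (power_top (pairing_topology (\<lambda>y x. ev x y)) n)"
      using \<open>d \<in> D \<sigma>\<close> D(1) Y by blast
    ultimately show ?thesis
      using inW unfolding V_def by blast
  qed
  moreover have "?D \<lesssim> K"
    by (rule countable_UN_lepoll[OF assms(1)]) (simp_all add: D(2))
  moreover have "?D \<subseteq> Y"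
    using D(1) by blast
  ultimately show "\<exists>D\<subseteq>Y. D \<lesssim> K \<and>
      (\<forall>y\<in>Y. \<forall>W. openin (power_top (pairing_topology (\<lambda>y x. ev x y)) n) W \<longrightarrow> y \<in> W \<longrightarrow> (\<exists>d\<in>D. d \<in> W))"
    by metis
qed

lemma open_cover_rat_box_refinement:
  assumes Y: "Y \<subseteq> topspace (power_top (pairing_topology ev) n)"
    and \<U>: "\<forall>U\<in>\<U>. openin (subtopology (power_top (pairing_topology ev) n) Y) U" and "Y \<subseteq> \<Union>\<U>"
  obtains U \<tau> F where "\<And>z. z \<in> Y \<Longrightarrow> U z \<in> \<U>"
    "\<And>z. z \<in> Y \<Longrightarrow> rat_box ev (\<tau> z) z (F z)"
    "\<And>z. z \<in> Y \<Longrightarrow> F z \<in> extensional {..<length (\<tau> z)}"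
    "\<And>z z'. z \<in> Y \<Longrightarrow> z' \<in> Y \<Longrightarrow> rat_box ev (\<tau> z) z' (F z) \<Longrightarrow> z' \<in> U z"
proof -
  have "\<exists>U \<tau> F. U \<in> \<U> \<and> rat_box ev \<tau> z F \<and> F \<in> extensional {..<length \<tau>} \<and>
      (\<forall>z'\<in>Y. rat_box ev \<tau> z' F \<longrightarrow> z' \<in> U)" if "z \<in> Y" for z
  proof -
    obtain U where "U \<in> \<U>" "z \<in> U"
      using \<open>Y \<subseteq> \<Union>\<U>\<close> \<open>z \<in> Y\<close> by blast
    have "openin (subtopology (power_top (pairing_topology ev) n) Y) U"
      using \<U> \<open>U \<in> \<U>\<close> by (rule bspec)
    then obtain W where W: "openin (power_top (pairing_topology ev) n) W" "U = W \<inter> Y"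
      unfolding openin_subtopology by metis
    with \<open>z \<in> U\<close> have "z \<in> W"
      by simp
    obtain \<tau> F where "rat_box ev \<tau> z F" "F \<in> extensional {..<length \<tau>}"
      and in_W: "\<And>z'. z' \<in> topspace (power_top (pairing_topology ev) n) \<Longrightarrow> rat_box ev \<tau> z' F \<Longrightarrow> z' \<in> W"
      by (rule openin_power_pairing_topology_rat_box[OF W(1) \<open>z \<in> W\<close>]) (rule that)
    moreover have "\<forall>z'\<in>Y. rat_box ev \<tau> z' F \<longrightarrow> z' \<in> U"
      using in_W Y W(2) by blast
    ultimately show ?thesis
      using \<open>U \<in> \<U>\<close> by blast
  qed
  then show thesis
    using that by metis
qed

lemma hL_le_power_if_hd_le_power:
  fixes ev :: "'x \<Rightarrow> 'y \<Rightarrow> real"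
  assumes "infinite K" "\<And>m. hd_le (power_top (pairing_topology (\<lambda>y x. ev x y)) m) K"
  shows "hL_le (power_top (pairing_topology ev) n) K"
  unfolding hL_le_def
proof (intro allI impI, elim conjE)
  fix Y \<U>
  assume "Y \<subseteq> topspace (power_top (pairing_topology ev) n)"
    and "\<forall>U\<in>\<U>. openin (subtopology (power_top (pairing_topology ev) n) Y) U" and "Y \<subseteq> \<Union>\<U>"
  then obtain U \<tau> F where U: "\<And>z. z \<in> Y \<Longrightarrow> U z \<in> \<U>"
    and box: "\<And>z. z \<in> Y \<Longrightarrow> rat_box ev (\<tau> z) z (F z)"
    and F: "\<And>z. z \<in> Y \<Longrightarrow> F z \<in> extensional {..<length (\<tau> z)}"
    and box_U: "\<And>z z'. z \<in> Y \<Longrightarrow> z' \<in> Y \<Longrightarrow> rat_box ev (\<tau> z) z' (F z) \<Longrightarrow> z' \<in> U z"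
    by (rule open_cover_rat_box_refinement) (rule that)
  have dense: "\<forall>\<sigma>. \<exists>E\<subseteq>{y \<in> Y. \<tau> y = \<sigma>}. E \<lesssim> K \<and> (\<forall>s\<in>{y \<in> Y. \<tau> y = \<sigma>}. \<forall>W.
      openin (power_top (pairing_topology (\<lambda>y x. ev x y)) (length \<sigma>)) W \<longrightarrow> F s \<in> W \<longrightarrow> (\<exists>e\<in>E. F e \<in> W))"
    using F by (intro allI hd_le_dense_index[OF assms(2)]) auto
  obtain E where E: "\<forall>\<sigma>. E \<sigma> \<subseteq> {y \<in> Y. \<tau> y = \<sigma>} \<and> E \<sigma> \<lesssim> K \<and> (\<forall>s\<in>{y \<in> Y. \<tau> y = \<sigma>}. \<forall>W.
      openin (power_top (pairing_topology (\<lambda>y x. ev x y)) (length \<sigma>)) W \<longrightarrow> F s \<in> W \<longrightarrow> (\<exists>e\<in>E \<sigma>. F e \<in> W))"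
    using choice[OF dense] by (elim exE) (rule that)
  let ?E = "\<Union>\<sigma>. E \<sigma>"
  have "Y \<subseteq> \<Union>(U ` ?E)"
  proof
    fix z
    assume "z \<in> Y"
    let ?W = "{G \<in> topspace (power_top (pairing_topology (\<lambda>y x. ev x y)) (length (\<tau> z))). rat_box ev (\<tau> z) z G}"
    have "openin (power_top (pairing_topology (\<lambda>y x. ev x y)) (length (\<tau> z))) ?W"
      by (rule openin_rat_box_parameters)
    moreover have "F z \<in> ?W"
      using box F \<open>z \<in> Y\<close> by simp
    moreover have "\<forall>W. openin (power_top (pairing_topology (\<lambda>y x. ev x y)) (length (\<tau> z))) W \<longrightarrow>
        F z \<in> W \<longrightarrow> (\<exists>e\<in>E (\<tau> z). F e \<in> W)"
      using E \<open>z \<in> Y\<close> by simp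
    ultimately obtain e where "e \<in> E (\<tau> z)" "F e \<in> ?W"
      by auto
    moreover have "e \<in> Y" "\<tau> e = \<tau> z"
      using E \<open>e \<in> E (\<tau> z)\<close> by auto
    ultimately have "z \<in> U e"
      using box_U \<open>z \<in> Y\<close> by simp
    then show "z \<in> \<Union>(U ` ?E)"
      using \<open>e \<in> E (\<tau> z)\<close> by blast
  qed
  moreover have "U ` ?E \<subseteq> \<U>"
    using E U by blast
  moreover have "?E \<lesssim> K"
    by (rule countable_UN_lepoll[OF assms(1)]) (simp_all add: E)
  then have "U ` ?E \<lesssim> K"
    using image_lepoll lepoll_trans by blast
  ultimately show "\<exists>\<V>. \<V> \<subseteq> \<U> \<and> \<V> \<lesssim> K \<and> Y \<subseteq> \<Union>\<V>"
    by blast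
qed

theorem hL_le_power_iff_hd_le_power:
  fixes ev :: "'x \<Rightarrow> 'y \<Rightarrow> real" and K :: "'k set"
  assumes "infinite K"
  shows "(\<forall>n. hL_le (power_top (pairing_topology ev) n) K) \<longleftrightarrow>
         (\<forall>n. hd_le (power_top (pairing_topology (\<lambda>y x. ev x y)) n) K)"
  using hd_le_power_if_hL_le_power[OF assms] hL_le_power_if_hd_le_power[OF assms] by metis

theorem mainTheorem10:
  fixes K :: "'k set"
  assumes "infinite K"
  shows "(\<forall>n::nat. hL_le (power_top (weak_topology :: 'a::banach topology) n) K) \<longleftrightarrow>
         (\<forall>n::nat. hd_le (power_top (weak_star_topology :: ('a \<Rightarrow>\<^sub>L real) topology) n) K)"
  using hL_le_power_iff_hd_le_power[OF assms, of "\<lambda>x f. blinfun_apply f x"]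
  by (simp add: weak_topology_eq_pairing_topology weak_star_topology_eq_pairing_topology)

end
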